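(* Let $G=(V,E)$ be a graph with a partition $(V_1,V_2)$ of $V$ such that $G[V_1]$ and $G[V_2]$ are $P_5$-free. Let $X\subseteq V_2$ be such that no vertex of $X$ has a neighbour in $V_1$ and exactly one vertex of $V_2\setminus X$ has a neighbour in $X$. If there exists a set $F\subseteq V_2$ such that $G\setminus F$ is $P_5$-free and $F\cap X\neq\emptyset$, then there exists a set $F'\subseteq V_2$ such that $G\setminus F'$ is $P_5$-free, $F'\cap X=\emptyset$, and $|F'|\le|F|$.
   Context: Graphs are finite, simple and undirected. A $P_5$ is a path on $5$ vertices (as a not necessarily induced subgraph); a graph is $P_5$-free if it contains no $P_5$. $G[X]$ denotes the subgraph induced by $X$, and $G\setminus F=G[V\setminus F]$. *)

theory Defs
  imports Main
begin

definition simple_graph :: "'a set \<Rightarrow> ('a \<Rightarrow> 'a \<Rightarrow> bool) \<Rightarrow> bool" where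
  "simple_graph V E \<longleftrightarrow> finite V \<and> (\<forall>u v. E u v \<longrightarrow> E v u)
     \<and> (\<forall>v. \<not> E v v) \<and> (\<forall>u v. E u v \<longrightarrow> u \<in> V \<and> v \<in> V)"

text \<open>The induced subgraph G[S] contains a P5 (not necessarily induced):
five distinct vertices of S, consecutive ones adjacent.\<close>
definition has_P5 :: "'a set \<Rightarrow> ('a \<Rightarrow> 'a \<Rightarrow> bool) \<Rightarrow> bool" where
  "has_P5 S E \<longleftrightarrow> (\<exists>v1 v2 v3 v4 v5.
      v1 \<in> S \<and> v2 \<in> S \<and> v3 \<in> S \<and> v4 \<in> S \<and> v5 \<in> S \<and>
      distinct [v1, v2, v3, v4, v5] \<and>
      E v1 v2 \<and> E v2 v3 \<and> E v3 v4 \<and> E v4 v5)"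

definition P5_free :: "'a set \<Rightarrow> ('a \<Rightarrow> 'a \<Rightarrow> bool) \<Rightarrow> bool" where
  "P5_free S E \<longleftrightarrow> \<not> has_P5 S E"

end

theory Submission
  imports Defs
begin

text \<open>Replace the vertices of \<open>F\<close> inside \<open>X\<close> by the unique vertex \<open>w\<close> of \<open>V\<^sub>2 - X\<close> attached to
\<open>X\<close>. Once \<open>w\<close> is deleted, no edge leaves \<open>X\<close>, so a \<open>P\<^sub>5\<close>, being connected, lies either inside
\<open>X \<subseteq> V\<^sub>2\<close> or outside \<open>X\<close>, where it avoids the original \<open>F\<close> as well.\<close>

lemma has_P5_mono: "S \<subseteq> T \<Longrightarrow> has_P5 S E \<Longrightarrow> has_P5 T E"
  unfolding has_P5_def by blast

lemma P5_free_subset: "S \<subseteq> T \<Longrightarrow> P5_free T E \<Longrightarrow> P5_free S E"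
  unfolding P5_free_def using has_P5_mono by blast

lemma has_P5_separated:
  assumes no_edge: "\<And>a b. a \<in> S \<inter> X \<Longrightarrow> b \<in> S - X \<Longrightarrow> \<not> E a b \<and> \<not> E b a"
    and "has_P5 S E"
  shows "has_P5 (S \<inter> X) E \<or> has_P5 (S - X) E"
proof -
  obtain v1 v2 v3 v4 v5 where
    path: "v1 \<in> S" "v2 \<in> S" "v3 \<in> S" "v4 \<in> S" "v5 \<in> S"
      "distinct [v1, v2, v3, v4, v5]" "E v1 v2" "E v2 v3" "E v3 v4" "E v4 v5"
    using \<open>has_P5 S E\<close> unfolding has_P5_def by blast
  have edge_stays: "a \<in> X \<longleftrightarrow> b \<in> X" if "a \<in> S" "b \<in> S" "E a b" for a b
    using that no_edge[of a b] no_edge[of b a] by auto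
  have "v1 \<in> X \<longleftrightarrow> v5 \<in> X" "v2 \<in> X \<longleftrightarrow> v1 \<in> X" "v3 \<in> X \<longleftrightarrow> v1 \<in> X" "v4 \<in> X \<longleftrightarrow> v1 \<in> X"
    using edge_stays[OF path(1,2,7)] edge_stays[OF path(2,3,8)]
      edge_stays[OF path(3,4,9)] edge_stays[OF path(4,5,10)] by simp_all
  then have "{v1, v2, v3, v4, v5} \<subseteq> S \<inter> X \<or> {v1, v2, v3, v4, v5} \<subseteq> S - X"
    using path(1-5) by (cases "v1 \<in> X") auto
  moreover have "has_P5 T E" if "{v1, v2, v3, v4, v5} \<subseteq> T" for T
    unfolding has_P5_def using that path(6-10)
    by (intro exI[of _ v1] exI[of _ v2] exI[of _ v3] exI[of _ v4] exI[of _ v5]) simp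
  ultimately show ?thesis by blast
qed

lemma card_insert_Diff_le:
  assumes "finite F" "F \<inter> X \<noteq> {}"
  shows "card (insert w (F - X)) \<le> card F"
proof -
  have "card (F - X) < card F"
    using assms by (intro psubset_card_mono) auto
  then show ?thesis
    using card_insert_le_m1 assms(1) by (simp add: card_insert_if)
qed

theorem lemma7:
  fixes V V1 V2 X F :: "'a set" and E :: "'a \<Rightarrow> 'a \<Rightarrow> bool"
  assumes graph: "simple_graph V E"
    and part: "V1 \<union> V2 = V" "V1 \<inter> V2 = {}"
    and free1: "P5_free V1 E" and free2: "P5_free V2 E"
    and X_sub: "X \<subseteq> V2"
    and X_no_V1: "\<forall>x\<in>X. \<forall>u\<in>V1. \<not> E x u"
    and one_attach: "\<exists>!w. w \<in> V2 - X \<and> (\<exists>x\<in>X. E w x)"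
    and F_sub: "F \<subseteq> V2" and F_free: "P5_free (V - F) E"
    and F_X: "F \<inter> X \<noteq> {}"
  shows "\<exists>F'. F' \<subseteq> V2 \<and> P5_free (V - F') E \<and> F' \<inter> X = {} \<and> card F' \<le> card F"
proof -
  obtain w where w: "w \<in> V2 - X"
    and w_unique: "\<And>y. y \<in> V2 - X \<Longrightarrow> \<exists>x\<in>X. E y x \<Longrightarrow> y = w"
    using one_attach by blast
  have sym: "\<And>u v. E u v \<Longrightarrow> E v u" and "finite V"
    using graph unfolding simple_graph_def by auto
  define F' where "F' = insert w (F - X)"
  have no_edge: "\<not> E a b \<and> \<not> E b a" if "a \<in> (V - F') \<inter> X" "b \<in> (V - F') - X" for a b
  proof -
    have "b \<notin> V1 \<or> \<not> E a b"
      using X_no_V1 that(1) by blast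
    moreover have "b \<notin> V2 - X \<or> \<not> E a b"
      using w_unique[of b] sym[of a b] that unfolding F'_def by blast
    ultimately show ?thesis
      using that part(1) sym[of b a] by blast
  qed
  have "P5_free (V - F') E"
  proof -
    have "P5_free ((V - F') \<inter> X) E"
      using X_sub by (blast intro: P5_free_subset[OF _ free2])
    moreover have "P5_free ((V - F') - X) E"
      unfolding F'_def by (blast intro: P5_free_subset[OF _ F_free])
    ultimately show ?thesis
      using has_P5_separated[of "V - F'" X E] no_edge unfolding P5_free_def by metis
  qed
  moreover have "card F' \<le> card F"
    unfolding F'_def using F_sub part(1) \<open>finite V\<close> F_X
    by (intro card_insert_Diff_le) (auto intro: finite_subset)
  moreover have "F' \<subseteq> V2" "F' \<inter> X = {}"
    using F_sub w unfolding F'_def by auto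
  ultimately show ?thesis by blast
qed

end
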